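(* Let $x$ be a context, $\pi_{\mathrm{old}}(\cdot\mid x)$ a distribution on a finite response set $\mathcal Y(x)$, $r:\mathcal Y(x)\to\mathbb R$ a reward, $\beta>0$, and $G\ge1$. Let $y_1,\dots,y_G$ be i.i.d. from $\pi_{\mathrm{old}}(\cdot\mid x)$, $r_j=r(y_j)$, and \[ \widehat A_i^\beta=r_i-\beta\log\Big(\frac1G\sum_{j=1}^G\exp(r_j/\beta)\Big),\qquad A^\beta(x,y)=\mathbb E\big[\widehat A_i^\beta\mid y_i=y\big] \] (which does not depend on $i$). Then $\mathbb E[\exp(\widehat A_i^\beta/\beta)]=1$ and \[ \mathbb E_{y\sim\pi_{\mathrm{old}}(\cdot\mid x)}\Big[\exp\Big(\frac{A^\beta(x,y)}{\beta}\Big)\Big]\le1 . \] Consequently, with $A=A^\beta$, there is no $\tau>0$ satisfying $\mathbb E_{y\sim\pi_{\mathrm{old}}}\big[\frac1\tau W_0(\tau e^{A^\beta(x,y)/\beta})\big]=1$, i.e. the induced Lambert multiplier satisfies $\tau_s\le0$.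
   Context: $W_0$ denotes the principal branch of the Lambert $W$ function, i.e. the inverse of $w\mapsto we^w$ on $[-1,\infty)$, satisfying $W_0(z)e^{W_0(z)}=z$. *)

theory Defs
  imports "HOL-Probability.Probability"
begin

definition LambertW0 :: "real \<Rightarrow> real" where
  "LambertW0 z = (THE w. -1 \<le> w \<and> w * exp w = z)"

definition group_sample :: "nat \<Rightarrow> 'y pmf \<Rightarrow> (nat \<Rightarrow> 'y) pmf" where
  "group_sample G p = Pi_pmf {..<G} undefined (\<lambda>_. p)"

definition adv_hat :: "('y \<Rightarrow> real) \<Rightarrow> real \<Rightarrow> nat \<Rightarrow> nat \<Rightarrow> (nat \<Rightarrow> 'y) \<Rightarrow> real" where
  "adv_hat r \<beta> G i ys =
     r (ys i) - \<beta> * ln ((1 / real G) * (\<Sum>j<G. exp (r (ys j) / \<beta>)))"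

definition adv_cond :: "'y pmf \<Rightarrow> ('y \<Rightarrow> real) \<Rightarrow> real \<Rightarrow> nat \<Rightarrow> nat \<Rightarrow> 'y \<Rightarrow> real" where
  "adv_cond p r \<beta> G i y =
     measure_pmf.expectation (cond_pmf (group_sample G p) {ys. ys i = y}) (adv_hat r \<beta> G i)"

end

theory Submission
  imports Defs "HOL-Combinatorics.Transposition"
begin

text \<open>
  The group samples are exchangeable, so all \<open>exp (\<hat>A\<^sub>i\<^sup>\<beta> / \<beta>)\<close> have the same expectation;
  they are \<open>G\<close> times the softmax weights of the rewards, which sum to \<open>G\<close>, hence each
  expectation is \<open>1\<close>. Conditioning on \<open>y\<^sub>i\<close> and Jensen's inequality for \<open>exp\<close> give
  \<open>E[exp (A\<^sup>\<beta> / \<beta>)] \<le> 1\<close>. Finally \<open>W\<^sub>0 z < z\<close> for \<open>z > 0\<close>, so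
  \<open>E[W\<^sub>0 (\<tau> e\<^bsup>A/\<beta>\<^esup>) / \<tau>] < E[e\<^bsup>A/\<beta>\<^esup>] \<le> 1\<close> for every \<open>\<tau> > 0\<close>.
\<close>

lemma LambertW0_eqI:
  assumes "0 < w"
  shows "LambertW0 (w * exp w) = w"
  unfolding LambertW0_def
proof (rule the_equality)
  show "-1 \<le> w \<and> w * exp w = w * exp w"
    using assms by simp
  fix v assume v: "-1 \<le> v \<and> v * exp v = w * exp w"
  have "0 < v * exp v"
    using v assms by simp
  then have "0 < v"
    by (simp add: zero_less_mult_iff)
  show "v = w"
  proof (rule linorder_cases)
    assume "v < w"
    then have "v * exp v < w * exp w"
      using \<open>0 < v\<close> by (intro mult_strict_mono) auto
    with v show ?thesis by simp
  next
    assume "w < v"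
    then have "w * exp w < v * exp v"
      using assms by (intro mult_strict_mono) auto
    with v show ?thesis by simp
  qed
qed

lemma LambertW0_less_self:
  assumes "0 < z"
  shows "LambertW0 z < z"
proof -
  have "\<exists>w. 0 \<le> w \<and> w \<le> z \<and> w * exp w = z"
  proof (rule IVT')
    show "z \<le> z * exp z"
      using assms by simp
    show "continuous_on {0..z} (\<lambda>w. w * exp w)"
      by (intro continuous_intros)
  qed (use assms in auto)
  then obtain w where "0 \<le> w" and w: "w * exp w = z"
    by blast
  with assms have "0 < w"
    by (cases "w = 0") auto
  then have "w * 1 < w * exp w"
    by (intro mult_strict_left_mono) auto
  then show ?thesis
    using LambertW0_eqI[OF \<open>0 < w\<close>] w by simp
qed

lemma exp_expectation_le:
  fixes f :: "'a \<Rightarrow> real"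
  assumes "finite (set_pmf M)"
  shows "exp (measure_pmf.expectation M f) \<le> measure_pmf.expectation M (\<lambda>x. exp (f x))"
  by (rule measure_pmf.jensens_inequality[where q = exp and X = f and I = UNIV])
    (simp_all add: integrable_measure_pmf_finite[OF assms] exp_convex)

lemma bind_cond_pmf_marginal:
  "bind_pmf (map_pmf g q) (\<lambda>y. cond_pmf q {x. g x = y}) = q"
proof (rule bind_cond_pmf_cancel)
  fix y x
  assume "y \<in> set_pmf (map_pmf g q)" "x \<in> set_pmf q" "g x = y"
  then show "measure q {x. g x = y} = measure (map_pmf g q) {y. g x = y}"
    by (simp add: vimage_def)
qed auto

lemma exp_cond_expectation_le:
  fixes f :: "'a \<Rightarrow> real"
  assumes "finite (set_pmf q)"
  shows "measure_pmf.expectation (map_pmf g q)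
           (\<lambda>y. exp (measure_pmf.expectation (cond_pmf q {x. g x = y}) f))
         \<le> measure_pmf.expectation q (\<lambda>x. exp (f x))"
proof -
  let ?p = "map_pmf g q" and ?c = "\<lambda>y. cond_pmf q {x. g x = y}"
  have fin: "finite (set_pmf ?p)"
    using assms by simp
  have fin_cond: "finite (set_pmf (?c y))" if "y \<in> set_pmf ?p" for y
    using assms that by (subst set_cond_pmf) auto
  have "measure_pmf.expectation ?p (\<lambda>y. exp (measure_pmf.expectation (?c y) f))
      = (\<Sum>y\<in>set_pmf ?p. pmf ?p y * exp (measure_pmf.expectation (?c y) f))"
    by (subst integral_measure_pmf[OF fin]) simp_all
  also have "\<dots> \<le> (\<Sum>y\<in>set_pmf ?p. pmf ?p y * measure_pmf.expectation (?c y) (\<lambda>x. exp (f x)))"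
    by (intro sum_mono mult_left_mono exp_expectation_le fin_cond) simp_all
  also have "\<dots> = measure_pmf.expectation (bind_pmf ?p ?c) (\<lambda>x. exp (f x))"
    using fin fin_cond by (simp add: pmf_expectation_bind)
  finally show ?thesis
    by (simp only: bind_cond_pmf_marginal)
qed

lemma expectation_cond_pmf_invariant:
  fixes f :: "'a \<Rightarrow> 'b::{banach, second_countable_topology}"
  assumes "map_pmf h q = q" and "set_pmf q \<inter> h -` A \<noteq> {}"
  shows "measure_pmf.expectation (cond_pmf q A) f
       = measure_pmf.expectation (cond_pmf q (h -` A)) (\<lambda>x. f (h x))"
proof -
  have "cond_pmf q A = map_pmf h (cond_pmf q (h -` A))"
    using cond_map_pmf[OF assms(2)] assms(1) by simp
  then show ?thesis
    by simp
qed

lemma finite_set_pmf_group_sample: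
  "finite (set_pmf p) \<Longrightarrow> finite (set_pmf (group_sample G p))"
  unfolding group_sample_def by (subst set_Pi_pmf) auto

lemma map_group_sample_component:
  "i < G \<Longrightarrow> map_pmf (\<lambda>ys. ys i) (group_sample G p) = p"
  unfolding group_sample_def by (subst Pi_pmf_component) auto

lemma map_group_sample_transpose:
  assumes "i < G" and "j < G"
  shows "map_pmf (\<lambda>ys. ys \<circ> Transposition.transpose i j) (group_sample G p) = group_sample G p"
  unfolding group_sample_def
  by (rule Pi_pmf_bij_betw[symmetric]) (use assms in \<open>auto simp: transpose_def\<close>)

lemma adv_hat_transpose:
  assumes "i < G" and "j < G"
  shows "adv_hat r \<beta> G i (ys \<circ> Transposition.transpose i j) = adv_hat r \<beta> G j ys"
proof -
  have "(\<Sum>k<G. exp (r (ys (Transposition.transpose i j k)) / \<beta>)) = (\<Sum>k<G. exp (r (ys k) / \<beta>))"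
    using assms by (intro sum.reindex_bij_betw) simp
  then show ?thesis
    by (simp add: adv_hat_def)
qed

lemma adv_cond_transpose:
  assumes "i < G" and "j < G" and "y \<in> set_pmf p"
  shows "adv_cond p r \<beta> G i y = adv_cond p r \<beta> G j y"
proof -
  let ?q = "group_sample G p" and ?h = "\<lambda>ys. ys \<circ> Transposition.transpose i j"
  have preimage: "?h -` {ys. ys i = y} = {ys. ys j = y}"
    by auto
  have "y \<in> set_pmf (map_pmf (\<lambda>ys. ys j) ?q)"
    using assms by (simp only: map_group_sample_component)
  then have "set_pmf ?q \<inter> ?h -` {ys. ys i = y} \<noteq> {}"
    unfolding preimage by auto
  from expectation_cond_pmf_invariant[OF map_group_sample_transpose[OF assms(1,2)] this,
      where f = "adv_hat r \<beta> G i"]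
  show ?thesis
    unfolding adv_cond_def preimage by (simp add: adv_hat_transpose assms)
qed

lemma exp_adv_hat:
  assumes "0 < \<beta>" and "0 < G"
  shows "exp (adv_hat r \<beta> G i ys / \<beta>)
       = real G * exp (r (ys i) / \<beta>) / (\<Sum>j<G. exp (r (ys j) / \<beta>))"
proof -
  let ?S = "\<Sum>j<G. exp (r (ys j) / \<beta>)"
  have "0 < ?S"
    using assms(2) by (intro sum_pos) auto
  have "adv_hat r \<beta> G i ys / \<beta> = r (ys i) / \<beta> - ln (?S / real G)"
    using assms(1) by (simp add: adv_hat_def field_simps)
  then show ?thesis
    using \<open>0 < ?S\<close> assms(2) by (simp add: exp_diff)
qed

lemma sum_exp_adv_hat:
  assumes "0 < \<beta>" and "0 < G"
  shows "(\<Sum>i<G. exp (adv_hat r \<beta> G i ys / \<beta>)) = real G"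
proof -
  have "0 < (\<Sum>j<G. exp (r (ys j) / \<beta>))"
    using assms(2) by (intro sum_pos) auto
  then show ?thesis
    by (simp add: exp_adv_hat[OF assms] sum_divide_distrib[symmetric] sum_distrib_left[symmetric])
qed

lemma expectation_exp_adv_hat:
  assumes "0 < \<beta>" and "i < G"
  shows "measure_pmf.expectation (group_sample G p) (\<lambda>ys. exp (adv_hat r \<beta> G i ys / \<beta>)) = 1"
proof -
  let ?q = "group_sample G p"
  let ?E = "\<lambda>k. measure_pmf.expectation ?q (\<lambda>ys. exp (adv_hat r \<beta> G k ys / \<beta>))"
  have "0 < G"
    using assms(2) by simp
  have exchange: "?E k = ?E i" if "k < G" for k
  proof -
    have "?E i = measure_pmf.expectation (map_pmf (\<lambda>ys. ys \<circ> Transposition.transpose i k) ?q)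
                   (\<lambda>ys. exp (adv_hat r \<beta> G i ys / \<beta>))"
      using assms(2) that by (simp only: map_group_sample_transpose)
    also have "\<dots> = ?E k"
      using assms(2) that by (simp add: adv_hat_transpose)
    finally show ?thesis ..
  qed
  have bounded: "exp (adv_hat r \<beta> G k ys / \<beta>) \<le> real G" if "k < G" for k ys
    using that member_le_sum[of k "{..<G}" "\<lambda>k. exp (adv_hat r \<beta> G k ys / \<beta>)"]
    by (simp add: sum_exp_adv_hat[OF assms(1) \<open>0 < G\<close>])
  have integrable: "integrable ?q (\<lambda>ys. exp (adv_hat r \<beta> G k ys / \<beta>))" if "k < G" for k
    by (rule measure_pmf.integrable_const_bound[where B = "real G"]) (simp_all add: bounded that)
  have "real G * ?E i = (\<Sum>k<G. ?E k)"
    by (simp add: exchange)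
  also have "\<dots> = measure_pmf.expectation ?q (\<lambda>ys. \<Sum>k<G. exp (adv_hat r \<beta> G k ys / \<beta>))"
    using integrable by (simp add: Bochner_Integration.integral_sum)
  also have "\<dots> = real G"
    by (simp add: sum_exp_adv_hat[OF assms(1) \<open>0 < G\<close>])
  finally show ?thesis
    using \<open>0 < G\<close> by simp
qed

lemma expectation_exp_adv_cond_le:
  assumes "finite (set_pmf p)" and "0 < \<beta>" and "i < G"
  shows "measure_pmf.expectation p (\<lambda>y. exp (adv_cond p r \<beta> G i y / \<beta>)) \<le> 1"
proof -
  let ?q = "group_sample G p"
  have "measure_pmf.expectation p (\<lambda>y. exp (adv_cond p r \<beta> G i y / \<beta>))
      = measure_pmf.expectation (map_pmf (\<lambda>ys. ys i) ?q)
          (\<lambda>y. exp (measure_pmf.expectation (cond_pmf ?q {ys. ys i = y})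
                       (\<lambda>ys. adv_hat r \<beta> G i ys / \<beta>)))"
    using assms(3) by (simp add: map_group_sample_component adv_cond_def)
  also have "\<dots> \<le> measure_pmf.expectation ?q (\<lambda>ys. exp (adv_hat r \<beta> G i ys / \<beta>))"
    using assms(1) by (intro exp_cond_expectation_le finite_set_pmf_group_sample)
  also have "\<dots> = 1"
    using assms(2,3) by (rule expectation_exp_adv_hat)
  finally show ?thesis .
qed

lemma expectation_LambertW0_less:
  fixes c :: "'a \<Rightarrow> real"
  assumes "finite (set_pmf p)" and "0 < \<tau>" and "\<And>y. y \<in> set_pmf p \<Longrightarrow> 0 < c y"
  shows "measure_pmf.expectation p (\<lambda>y. (1 / \<tau>) * LambertW0 (\<tau> * c y))
       < measure_pmf.expectation p c"
proof -
  have "measure_pmf.expectation p (\<lambda>y. (1 / \<tau>) * LambertW0 (\<tau> * c y))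
      = (\<Sum>y\<in>set_pmf p. pmf p y * ((1 / \<tau>) * LambertW0 (\<tau> * c y)))"
    by (subst integral_measure_pmf[OF assms(1)]) simp_all
  also have "\<dots> < (\<Sum>y\<in>set_pmf p. pmf p y * c y)"
  proof (rule sum_strict_mono[OF assms(1) set_pmf_not_empty])
    fix y assume y: "y \<in> set_pmf p"
    have "LambertW0 (\<tau> * c y) < \<tau> * c y"
      using assms(2) assms(3)[OF y] by (intro LambertW0_less_self) simp
    then have "(1 / \<tau>) * LambertW0 (\<tau> * c y) < c y"
      using assms(2) by (simp add: field_simps)
    then show "pmf p y * ((1 / \<tau>) * LambertW0 (\<tau> * c y)) < pmf p y * c y"
      using y by (intro mult_strict_left_mono) (simp_all add: pmf_positive)
  qed
  also have "\<dots> = measure_pmf.expectation p c"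
    by (subst integral_measure_pmf[OF assms(1)]) simp_all
  finally show ?thesis .
qed

lemma no_LambertW0_multiplier:
  assumes "finite (set_pmf p)" and "0 < \<beta>" and "i < G"
  shows "\<not> (\<exists>\<tau>>0. measure_pmf.expectation p
              (\<lambda>y. (1 / \<tau>) * LambertW0 (\<tau> * exp (adv_cond p r \<beta> G i y / \<beta>))) = 1)"
proof
  assume "\<exists>\<tau>>0. measure_pmf.expectation p
            (\<lambda>y. (1 / \<tau>) * LambertW0 (\<tau> * exp (adv_cond p r \<beta> G i y / \<beta>))) = 1"
  then obtain \<tau> where "0 < \<tau>" and multiplier: "measure_pmf.expectation p
            (\<lambda>y. (1 / \<tau>) * LambertW0 (\<tau> * exp (adv_cond p r \<beta> G i y / \<beta>))) = 1"
    by blast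
  have "measure_pmf.expectation p
          (\<lambda>y. (1 / \<tau>) * LambertW0 (\<tau> * exp (adv_cond p r \<beta> G i y / \<beta>)))
      < measure_pmf.expectation p (\<lambda>y. exp (adv_cond p r \<beta> G i y / \<beta>))"
    using assms(1) \<open>0 < \<tau>\<close> by (rule expectation_LambertW0_less) simp
  also have "\<dots> \<le> 1"
    using assms by (rule expectation_exp_adv_cond_le)
  finally show False
    using multiplier by simp
qed

theorem mainTheorem6:
  fixes p :: "'y pmf" and Y :: "'y set" and r :: "'y \<Rightarrow> real"
    and \<beta> :: real and G :: nat
  assumes "finite Y" and "set_pmf p \<subseteq> Y"
    and "\<beta> > 0" and "G \<ge> 1"
  shows "(\<forall>i<G. \<forall>j<G. \<forall>y\<in>set_pmf p. adv_cond p r \<beta> G i y = adv_cond p r \<beta> G j y)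
       \<and> (\<forall>i<G. measure_pmf.expectation (group_sample G p)
                   (\<lambda>ys. exp (adv_hat r \<beta> G i ys / \<beta>)) = 1)
       \<and> (\<forall>i<G. measure_pmf.expectation p (\<lambda>y. exp (adv_cond p r \<beta> G i y / \<beta>)) \<le> 1)
       \<and> (\<forall>i<G. \<not> (\<exists>\<tau>>0. measure_pmf.expectation p
                   (\<lambda>y. (1 / \<tau>) * LambertW0 (\<tau> * exp (adv_cond p r \<beta> G i y / \<beta>))) = 1))"
proof -
  have fin: "finite (set_pmf p)"
    using assms(1,2) by (rule finite_subset[rotated])
  show ?thesis
    by (intro conjI allI impI ballI adv_cond_transpose expectation_exp_adv_hat[OF assms(3)]
        expectation_exp_adv_cond_le[OF fin assms(3)] no_LambertW0_multiplier[OF fin assms(3)])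
qed

end
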